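(* Under the hypotheses in the context (decomposition of $\mathcal X$ over $A$, $g\in\mathcal G_s$, integer $T>0$, and $\operatorname{argmin}_{u\in\mathcal U} J^*_{t+1}(Ax+Bu)\cap[\bigoplus_{i\in\mathcal I}\mathcal E_i]\neq\emptyset$ for all $x\in\mathcal X$ and $t\in\{0,\dots,T-1\}$), the optimal cost $J^*=J^*_0$ of the finite-horizon problem $(A,B,g,T)$ belongs to $\mathcal G_s$, i.e. $J^*(x)=\sum_{i\in\mathcal I}J^*(\rho_i(x))$ for all $x\in\mathcal X$.
   Context: Let $\mathcal F$ be a field and $\mathcal X,\mathcal U$ finite-dimensional vector spaces over $\mathcal F$. Let $A:\mathcal X\to\mathcal X$ and $B:\mathcal U\to\mathcal X$ be linear maps with $B$ injective, and let $g:\mathcal X\to\mathbb R_{\ge0}$ satisfy $g(x)=0\iff x=0$. Standing assumption: all minima appearing below are attained. For the finite-horizon problem $(A,B,g,T)$ associated with $x_{t+1}=Ax_t+Bu_t$ (cost $\sum_{t=0}^Tg(x_t)$ minimized over input sequences $u_0,\dots,u_{T-1}$), the cost-to-go functions are $J^*_T=g$ and $J^*_t(x)=g(x)+\min_{u\in\mathcal U}J^*_{t+1}(Ax+Bu)$, and the optimal cost is $J^*=J^*_0$. A decomposition of $\mathcal X$ over $A$ is a direct sum $\mathcal X=\mathcal X_1\oplus\cdots\oplus\mathcal X_r$ with $r>1$ and $A\mathcal X_i\subseteq\mathcal X_i$ for all $i\in\mathcal I=\{1,\dots,r\}$; $\rho_i:\mathcal X\to\mathcal X_i$ is the projection along the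 other summands. $\mathcal G_s$ is the set of $h:\mathcal X\to\mathbb R_{\ge0}$ with $h(x)=\sum_i h(\rho_i(x))$ for all $x$. $\mathcal E_i=\{u\in\mathcal U:Bu\in\mathcal X_i\}$. *)

theory Defs
  imports Complex_Main
begin

definition is_decomposition ::
  "('f::field \<Rightarrow> 'x::ab_group_add \<Rightarrow> 'x) \<Rightarrow> ('x \<Rightarrow> 'x) \<Rightarrow> nat \<Rightarrow> (nat \<Rightarrow> 'x set) \<Rightarrow> bool" where
  "is_decomposition sX A r Xs \<longleftrightarrow>
     r > 1 \<and>
     (\<forall>i\<in>{1..r}. module.subspace sX (Xs i)) \<and>
     (\<forall>i\<in>{1..r}. A ` Xs i \<subseteq> Xs i) \<and>
     (\<forall>x. \<exists>!v. (\<forall>i\<in>{1..r}. v i \<in> Xs i) \<and> (\<forall>i. i \<notin> {1..r} \<longrightarrow> v i = 0)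
              \<and> x = (\<Sum>i=1..r. v i))"

definition proj :: "nat \<Rightarrow> (nat \<Rightarrow> 'x::ab_group_add set) \<Rightarrow> nat \<Rightarrow> 'x \<Rightarrow> 'x" where
  "proj r Xs i x = (THE v. (\<forall>j\<in>{1..r}. v j \<in> Xs j) \<and> (\<forall>j. j \<notin> {1..r} \<longrightarrow> v j = 0)
                         \<and> x = (\<Sum>j=1..r. v j)) i"

definition Gs :: "nat \<Rightarrow> (nat \<Rightarrow> 'x::ab_group_add set) \<Rightarrow> ('x \<Rightarrow> real) set" where
  "Gs r Xs = {h. (\<forall>x. h x \<ge> 0) \<and> (\<forall>x. h x = (\<Sum>i=1..r. h (proj r Xs i x)))}"

text \<open>Value function with k steps to go: V_0 = g, V_{k+1}(x) = g x + min_u V_k(Ax+Bu)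
  (min written as Inf; it is attained under the standing assumption).\<close>
fun Vtogo :: "('x::ab_group_add \<Rightarrow> 'x) \<Rightarrow> ('u \<Rightarrow> 'x) \<Rightarrow> ('x \<Rightarrow> real) \<Rightarrow> nat \<Rightarrow> 'x \<Rightarrow> real" where
  "Vtogo A B g 0 x = g x"
| "Vtogo A B g (Suc k) x = g x + (INF u. Vtogo A B g k (A x + B u))"

definition Jstar :: "('x::ab_group_add \<Rightarrow> 'x) \<Rightarrow> ('u \<Rightarrow> 'x) \<Rightarrow> ('x \<Rightarrow> real) \<Rightarrow> nat \<Rightarrow> nat \<Rightarrow> 'x \<Rightarrow> real" where
  "Jstar A B g T t = Vtogo A B g (T - t)"

definition argmin_set :: "('u \<Rightarrow> real) \<Rightarrow> 'u set" where
  "argmin_set f = {u. \<forall>u'. f u \<le> f u'}"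

definition Eset :: "('u \<Rightarrow> 'x) \<Rightarrow> (nat \<Rightarrow> 'x set) \<Rightarrow> nat \<Rightarrow> 'u set" where
  "Eset B Xs i = {u. B u \<in> Xs i}"

definition Esum :: "nat \<Rightarrow> ('u::ab_group_add \<Rightarrow> 'x) \<Rightarrow> (nat \<Rightarrow> 'x set) \<Rightarrow> 'u set" where
  "Esum r B Xs = {\<Sum>i=1..r. e i | e. \<forall>i\<in>{1..r}. e i \<in> Eset B Xs i}"

end

theory Submission
  imports Defs
begin

text \<open>Since the summands are A-invariant, a state x = x_1 + ... + x_r driven by an input
  u = e_1 + ... + e_r with B e_i \<in> X_i evolves componentwise: the i-th projection of
  A x + B u is A x_i + B e_i. Hence if the cost-to-go V is additive over the summands,
  so is its one-step minimum: a minimiser for x taken from E_1 + ... + E_r splits into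
  admissible inputs for the components, and conversely minimisers for the components
  add up to an input for x. Adding the additive stage cost g and inducting on the
  number of steps to go shows that every J*_t lies in G_s.\<close>

lemma Gs_nonneg: "h \<in> Gs r Xs \<Longrightarrow> h x \<ge> 0"
  unfolding Gs_def by blast

lemma Gs_additive: "h \<in> Gs r Xs \<Longrightarrow> h x = (\<Sum>i=1..r. h (proj r Xs i x))"
  unfolding Gs_def by blast

lemma Gs_add:
  assumes "g \<in> Gs r Xs" and "h \<in> Gs r Xs"
  shows "(\<lambda>x. g x + h x) \<in> Gs r Xs"
  unfolding Gs_def
proof (intro CollectI allI conjI)
  fix x
  show "0 \<le> g x + h x"
    by (rule add_nonneg_nonneg) (use assms Gs_nonneg in auto)
  have "g x + h x = (\<Sum>i=1..r. g (proj r Xs i x)) + (\<Sum>i=1..r. h (proj r Xs i x))"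
    using Gs_additive[OF assms(1)] Gs_additive[OF assms(2)] by (rule arg_cong2)
  then show "g x + h x = (\<Sum>i=1..r. g (proj r Xs i x) + h (proj r Xs i x))"
    by (simp only: sum.distrib)
qed

lemma Esum_minimiser:
  assumes "argmin_set f \<inter> Esum r B Xs \<noteq> {}"
  obtains e where "\<forall>j\<in>{1..r}. e j \<in> Eset B Xs j"
    and "(INF u. f u) = f (\<Sum>j=1..r. e j)" and "\<And>u. f (\<Sum>j=1..r. e j) \<le> f u"
proof -
  obtain e where e: "\<forall>j\<in>{1..r}. e j \<in> Eset B Xs j"
    and min: "\<And>u. f (\<Sum>j=1..r. e j) \<le> f u"
    using assms unfolding argmin_set_def Esum_def by blast
  moreover have "(INF u. f u) = f (\<Sum>j=1..r. e j)"
    by (rule cInf_eq_minimum) (use min in auto)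
  ultimately show thesis using that by blast
qed

lemma Vtogo_Suc_fun:
  "Vtogo A B g (Suc k) = (\<lambda>x. g x + (INF u. Vtogo A B g k (A x + B u)))"
  by (rule ext) simp

locale direct_sum =
  fixes r :: nat and Xs :: "nat \<Rightarrow> 'x::ab_group_add set"
  assumes summand_zero: "i \<in> {1..r} \<Longrightarrow> 0 \<in> Xs i"
    and summand_add: "i \<in> {1..r} \<Longrightarrow> a \<in> Xs i \<Longrightarrow> b \<in> Xs i \<Longrightarrow> a + b \<in> Xs i"
    and unique_decomposition: "\<forall>x. \<exists>!v. (\<forall>i\<in>{1..r}. v i \<in> Xs i)
      \<and> (\<forall>i. i \<notin> {1..r} \<longrightarrow> v i = 0) \<and> x = (\<Sum>i=1..r. v i)"
begin

lemma proj_unique: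
  assumes "\<forall>j\<in>{1..r}. w j \<in> Xs j" and "i \<in> {1..r}"
  shows "proj r Xs i (\<Sum>j=1..r. w j) = w i"
proof -
  define w' where "w' j = (if j \<in> {1..r} then w j else 0)" for j
  have "(THE v. (\<forall>j\<in>{1..r}. v j \<in> Xs j) \<and> (\<forall>j. j \<notin> {1..r} \<longrightarrow> v j = 0)
          \<and> (\<Sum>j=1..r. w j) = (\<Sum>j=1..r. v j)) = w'"
    by (rule the1_equality[OF unique_decomposition[rule_format]])
       (use assms(1) in \<open>auto simp: w'_def\<close>)
  then have "proj r Xs i (\<Sum>j=1..r. w j) = w' i"
    unfolding proj_def by (rule fun_cong)
  with assms(2) show ?thesis
    by (simp add: w'_def)
qed

lemma proj_in_summand_and_sum:
  "(\<forall>i\<in>{1..r}. proj r Xs i x \<in> Xs i) \<and> x = (\<Sum>i=1..r. proj r Xs i x)"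
  unfolding proj_def using theI'[OF unique_decomposition[rule_format, of x]] by blast

lemma proj_in_summand: "i \<in> {1..r} \<Longrightarrow> proj r Xs i x \<in> Xs i"
  using proj_in_summand_and_sum by blast

lemma sum_proj: "(\<Sum>i=1..r. proj r Xs i x) = x"
  using proj_in_summand_and_sum by simp

lemma proj_summand:
  assumes "i \<in> {1..r}" and "z \<in> Xs i"
  shows "proj r Xs i z = z"
proof -
  have "proj r Xs i (\<Sum>j=1..r. if j = i then z else 0) = (if i = i then z else 0)"
    by (rule proj_unique) (use assms summand_zero in auto)
  then show ?thesis
    using assms(1) by (simp add: sum.delta)
qed

end

locale decomposed_system = direct_sum r Xs
  for r :: nat and Xs :: "nat \<Rightarrow> 'x::ab_group_add set" +
  fixes A :: "'x \<Rightarrow> 'x" and B :: "'u::ab_group_add \<Rightarrow> 'x"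
  assumes additive_A: "additive A" and additive_B: "additive B"
    and invariant: "i \<in> {1..r} \<Longrightarrow> x \<in> Xs i \<Longrightarrow> A x \<in> Xs i"
begin

lemma proj_transition:
  assumes e: "\<forall>j\<in>{1..r}. e j \<in> Eset B Xs j" and i: "i \<in> {1..r}"
  shows "proj r Xs i (A z + B (\<Sum>j=1..r. e j)) = A (proj r Xs i z) + B (e i)"
proof -
  have "A z + B (\<Sum>j=1..r. e j) = A (\<Sum>j=1..r. proj r Xs j z) + B (\<Sum>j=1..r. e j)"
    by (simp only: sum_proj)
  also have "\<dots> = (\<Sum>j=1..r. A (proj r Xs j z) + B (e j))"
    by (simp only: additive.sum[OF additive_A] additive.sum[OF additive_B] sum.distrib)
  finally have "proj r Xs i (A z + B (\<Sum>j=1..r. e j))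
      = proj r Xs i (\<Sum>j=1..r. A (proj r Xs j z) + B (e j))"
    by (rule arg_cong)
  also have "\<dots> = A (proj r Xs i z) + B (e i)"
    using e i by (intro proj_unique)
      (auto simp: Eset_def intro!: summand_add invariant proj_in_summand)
  finally show ?thesis .
qed

lemma Gs_transition:
  assumes "V \<in> Gs r Xs" and "\<forall>j\<in>{1..r}. e j \<in> Eset B Xs j"
  shows "V (A z + B (\<Sum>j=1..r. e j)) = (\<Sum>i=1..r. V (A (proj r Xs i z) + B (e i)))"
proof -
  have "V (A z + B (\<Sum>j=1..r. e j)) = (\<Sum>i=1..r. V (proj r Xs i (A z + B (\<Sum>j=1..r. e j))))"
    by (rule Gs_additive[OF assms(1)])
  also have "\<dots> = (\<Sum>i=1..r. V (A (proj r Xs i z) + B (e i)))"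
    using proj_transition[OF assms(2)] by (intro sum.cong) simp_all
  finally show ?thesis .
qed

lemma INF_transition_in_Gs:
  assumes V: "V \<in> Gs r Xs"
    and argmin: "\<And>z. argmin_set (\<lambda>u. V (A z + B u)) \<inter> Esum r B Xs \<noteq> {}"
  shows "(\<lambda>z. INF u. V (A z + B u)) \<in> Gs r Xs"
proof -
  define W where "W z = (INF u. V (A z + B u))" for z
  have W_le: "W z \<le> V (A z + B u)" for z u
    unfolding W_def by (rule Esum_minimiser[OF argmin[of z]]) simp
  have "\<exists>e. (\<forall>j\<in>{1..r}. e j \<in> Eset B Xs j) \<and> W z = V (A z + B (\<Sum>j=1..r. e j))" for z
  proof -
    obtain e where "\<forall>j\<in>{1..r}. e j \<in> Eset B Xs j" and "W z = V (A z + B (\<Sum>j=1..r. e j))"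
      unfolding W_def by (rule Esum_minimiser[OF argmin[of z]])
    then show ?thesis by blast
  qed
  then obtain E where E: "\<And>z. \<forall>j\<in>{1..r}. E z j \<in> Eset B Xs j"
    and W_E: "\<And>z. W z = V (A z + B (\<Sum>j=1..r. E z j))"
    by metis
  have W_split: "W z = (\<Sum>i=1..r. V (A (proj r Xs i z) + B (E z i)))" for z
    unfolding W_E by (rule Gs_transition[OF V E])
  have W_additive: "W x = (\<Sum>i=1..r. W (proj r Xs i x))" for x
  proof (rule antisym)
    define p where "p i = proj r Xs i x" for i
    have f: "\<forall>j\<in>{1..r}. E (p j) j \<in> Eset B Xs j"
      using E by blast
    have "W x \<le> V (A x + B (\<Sum>j=1..r. E (p j) j))"
      by (rule W_le)
    also have "\<dots> = (\<Sum>i=1..r. V (A (p i) + B (E (p i) i)))"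
      unfolding p_def by (rule Gs_transition[OF V f[unfolded p_def]])
    also have "\<dots> \<le> (\<Sum>i=1..r. W (p i))"
    proof (rule sum_mono)
      fix i assume i: "i \<in> {1..r}"
      have "V (A (p i) + B (E (p i) i)) = V (A (proj r Xs i (p i)) + B (E (p i) i))"
        using proj_summand[OF i proj_in_summand[OF i]] unfolding p_def by simp
      also have "\<dots> \<le> (\<Sum>j=1..r. V (A (proj r Xs j (p i)) + B (E (p i) j)))"
        using i by (intro member_le_sum) (simp_all add: Gs_nonneg[OF V])
      also have "\<dots> = W (p i)"
        by (rule W_split[symmetric])
      finally show "V (A (p i) + B (E (p i) i)) \<le> W (p i)" .
    qed
    finally show "W x \<le> (\<Sum>i=1..r. W (proj r Xs i x))"
      unfolding p_def .
    show "(\<Sum>i=1..r. W (proj r Xs i x)) \<le> W x"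
      unfolding W_split[of x] by (rule sum_mono) (rule W_le)
  qed
  moreover have "W z \<ge> 0" for z
    unfolding W_E by (rule Gs_nonneg[OF V])
  ultimately have "W \<in> Gs r Xs"
    unfolding Gs_def by blast
  moreover have "W = (\<lambda>z. INF u. V (A z + B u))"
    by (rule ext) (rule W_def)
  ultimately show ?thesis
    by simp
qed

lemma Vtogo_in_Gs:
  assumes g: "g \<in> Gs r Xs"
    and argmin: "\<And>k z. k < K \<Longrightarrow>
      argmin_set (\<lambda>u. Vtogo A B g k (A z + B u)) \<inter> Esum r B Xs \<noteq> {}"
  shows "Vtogo A B g K \<in> Gs r Xs"
  using argmin
proof (induction K)
  case 0
  have "Vtogo A B g 0 = g"
    by (rule ext) simp
  with g show ?case
    by simp
next
  case (Suc K)
  show ?case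
    unfolding Vtogo_Suc_fun
    by (intro Gs_add[OF g] INF_transition_in_Gs Suc.IH Suc.prems) auto
qed

end

lemma additive_if_linear: "Vector_Spaces.linear s1 s2 f \<Longrightarrow> additive f"
  unfolding Vector_Spaces.linear_iff by (simp add: additive.intro)

lemma decomposed_system_if_is_decomposition:
  assumes decomp: "is_decomposition sX A r Xs"
    and linA: "Vector_Spaces.linear sX sX A" and linB: "Vector_Spaces.linear sU sX B"
  shows "decomposed_system r Xs A B"
proof -
  have "module sX"
    using linA unfolding Vector_Spaces.linear_iff module_iff_vector_space by blast
  obtain subspaces: "\<forall>i\<in>{1..r}. module.subspace sX (Xs i)"
    and invariant: "\<forall>i\<in>{1..r}. A ` Xs i \<subseteq> Xs i"
    and unique: "\<forall>x. \<exists>!v. (\<forall>i\<in>{1..r}. v i \<in> Xs i) \<and> (\<forall>i. i \<notin> {1..r} \<longrightarrow> v i = 0)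
      \<and> x = (\<Sum>i=1..r. v i)"
    using decomp unfolding is_decomposition_def by (elim conjE) (rule that)
  show ?thesis
  proof (intro decomposed_system.intro direct_sum.intro decomposed_system_axioms.intro)
    show "0 \<in> Xs i" if "i \<in> {1..r}" for i
      using module.subspace_0[OF \<open>module sX\<close>] subspaces that by blast
    show "a + b \<in> Xs i" if "i \<in> {1..r}" "a \<in> Xs i" "b \<in> Xs i" for i a b
      using module.subspace_add[OF \<open>module sX\<close>] subspaces that by blast
    show "A x \<in> Xs i" if "i \<in> {1..r}" "x \<in> Xs i" for i x
      using invariant that by blast
    show "additive A"
      using linA by (rule additive_if_linear)
    show "additive B"
      using linB by (rule additive_if_linear)
  qed (fact unique)
qed

theorem corollary1:
  fixes sX :: "'f::field \<Rightarrow> 'x::ab_group_add \<Rightarrow> 'x"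
    and sU :: "'f \<Rightarrow> 'u::ab_group_add \<Rightarrow> 'u"
    and A :: "'x \<Rightarrow> 'x" and B :: "'u \<Rightarrow> 'x" and g :: "'x \<Rightarrow> real"
    and r T :: nat and Xs :: "nat \<Rightarrow> 'x set"
  assumes vsX: "\<exists>b. finite_dimensional_vector_space sX b"
    and vsU: "\<exists>b. finite_dimensional_vector_space sU b"
    and linA: "Vector_Spaces.linear sX sX A"
    and linB: "Vector_Spaces.linear sU sX B"
    and injB: "inj B"
    and g_nonneg: "\<forall>x. g x \<ge> 0"
    and g_zero: "\<forall>x. g x = 0 \<longleftrightarrow> x = 0"
    and attained: "\<forall>t<T. \<forall>x. \<exists>u. \<forall>u'. Jstar A B g T (Suc t) (A x + B u) \<le> Jstar A B g T (Suc t) (A x + B u')"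
    and decomp: "is_decomposition sX A r Xs"
    and gGs: "g \<in> Gs r Xs"
    and Tpos: "T > 0"
    and argmin_hyp: "\<forall>x. \<forall>t<T. argmin_set (\<lambda>u. Jstar A B g T (Suc t) (A x + B u)) \<inter> Esum r B Xs \<noteq> {}"
  shows "Jstar A B g T 0 \<in> Gs r Xs"
proof -
  interpret decomposed_system r Xs A B
    using decomposed_system_if_is_decomposition[OF decomp linA linB] .
  have "argmin_set (\<lambda>u. Vtogo A B g k (A z + B u)) \<inter> Esum r B Xs \<noteq> {}" if "k < T" for k z
  proof -
    have "T - Suc k < T"
      using that by simp
    then have "argmin_set (\<lambda>u. Jstar A B g T (Suc (T - Suc k)) (A z + B u)) \<inter> Esum r B Xs \<noteq> {}"
      using argmin_hyp by blast
    moreover have "Jstar A B g T (Suc (T - Suc k)) = Vtogo A B g k"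
      using that unfolding Jstar_def by (simp add: Suc_diff_Suc)
    ultimately show ?thesis
      by simp
  qed
  then have "Vtogo A B g T \<in> Gs r Xs"
    by (rule Vtogo_in_Gs[OF gGs])
  then show ?thesis
    unfolding Jstar_def diff_zero .
qed

end
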